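(* Let $n=4k$ with $k\ge2$, let $u_1,\ldots,u_k\in\mathbb{F}_{2^{2k}}^*$ satisfy $u_iu_j^{2^k}\in\mathbb{F}_{2^k}^*$ for all $1\le i<j\le k$, and let $\omega$ be a generator of the cyclic group $U=\{x\in\mathbb{F}_{2^{2k}}: x^{2^k+1}=1\}$. Let $t$ be a positive integer, $F_1,\ldots,F_t$ reduced polynomials in $\mathbb{F}_2[X_1,\ldots,X_k]$, and $f_i(x)=F_i(\mathrm{Tr}^n_1(u_1x),\ldots,\mathrm{Tr}^n_1(u_kx))$. Then $\widehat H(x)=(\mathrm{Tr}^n_k(\omega x^{2^k+1}),f_1(x),\ldots,f_t(x))$ is a vectorial plateaued $(n,k+t)$-function if and only if the $(n,t)$-function $(f_1,\ldots,f_t)$ is vectorial plateaued.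
   Context: $\mathrm{Tr}^m_1(x)=\sum_{i=0}^{m-1}x^{2^i}$, $\mathrm{Tr}^{4k}_k(x)=x+x^{2^k}+x^{2^{2k}}+x^{2^{3k}}$. $\widehat H:\mathbb{F}_{2^n}\to\mathbb{F}_{2^k}\times\mathbb{F}_2^t$ has components $\mathrm{Tr}^k_1(\lambda\,\mathrm{Tr}^n_k(\omega x^{2^k+1}))+\sum_iv_if_i(x)$, $(\lambda,v)\ne(0,0)$. A Boolean function $f$ is plateaued if $W_f(a)=\sum_x(-1)^{f(x)+\mathrm{Tr}^n_1(ax)}$ takes values in $\{0,\pm2^s\}$ for some $n/2\le s\le n$; a vectorial function is vectorial plateaued if all its components are plateaued. A reduced polynomial is a multilinear polynomial over $\mathbb{F}_2$. *)

theory Defs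
  imports Main
begin

definition tr :: "nat \<Rightarrow> 'a::field \<Rightarrow> 'a" where
  "tr m x = (\<Sum>i<m. x ^ (2 ^ i))"

definition rtr :: "nat \<Rightarrow> nat \<Rightarrow> 'a::field \<Rightarrow> 'a" where
  "rtr n k x = (\<Sum>i<n div k. x ^ (2 ^ (k * i)))"

text \<open>Walsh transform of a Boolean function f (values in F_2 = {0,1} inside the field),
  W_f(a) = sum_x (-1)^(f(x) + Tr^n_1(a x)).\<close>
definition walsh :: "nat \<Rightarrow> ('a::{field,finite} \<Rightarrow> 'a) \<Rightarrow> 'a \<Rightarrow> int" where
  "walsh n f a = (\<Sum>x\<in>UNIV. if f x + tr n (a * x) = 0 then 1 else -1)"

definition plateaued :: "nat \<Rightarrow> ('a::{field,finite} \<Rightarrow> 'a) \<Rightarrow> bool" where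
  "plateaued n f = (\<exists>s::nat. n \<le> 2 * s \<and> s \<le> n \<and>
      (\<forall>a. walsh n f a \<in> {0, 2 ^ s, - (2 ^ s)}))"

text \<open>Evaluation of a reduced (multilinear) polynomial over F_2 in variables X_0..X_{k-1},
  given by its coefficients c(S) in F_2 (True = 1) of the monomials prod_{i in S} X_i.\<close>
definition reduced_eval :: "nat \<Rightarrow> (nat set \<Rightarrow> bool) \<Rightarrow> (nat \<Rightarrow> 'a::field) \<Rightarrow> 'a" where
  "reduced_eval k c X = (\<Sum>S\<in>Pow {..<k}. if c S then (\<Prod>i\<in>S. X i) else 0)"

end

theory Submission
  imports Defs "HOL-Computational_Algebra.Polynomial"
begin

text \<open>For \<open>lam = 0\<close> both sides speak about the same functions, so the content lies in the
  components with \<open>lam \<noteq> 0\<close>: these are bent, whatever the \<open>f i\<close> are.  Let \<open>q = 2 ^ k\<close> and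
  \<open>\<mu> = lam * \<omega> \<in> GF(q\<^sup>2) - GF(q)\<close>.  The quadratic part is \<open>Q x = tr n (\<mu> * x ^ (q + 1))\<close>,
  and \<open>Q (x + d) = Q x + Q d + tr n (x * polar k \<mu> d)\<close>, where \<open>polar k \<mu>\<close> is injective and
  maps only elements of \<open>GF(q\<^sup>2)\<close> into \<open>GF(q\<^sup>2)\<close>.  The Boolean part \<open>G\<close> depends on \<open>x\<close> only
  through the traces \<open>tr n (u j * x)\<close>, so it is periodic modulo their common kernel \<open>K\<close>,
  whose annihilator is the set of subset sums of the \<open>u j\<close>, a subset of \<open>GF(q\<^sup>2)\<close>.  In
  \<open>W(a)\<^sup>2 = \<Sum>d. (-1)^(Q d + tr n (a * d)) * \<Sum>x. (-1)^(tr n (x * polar k \<mu> d) + G x + G (x + d))\<close>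
  the inner sum vanishes for \<open>d \<noteq> 0\<close>: if \<open>polar k \<mu> d\<close> is a subset sum, then
  \<open>d \<in> GF(q\<^sup>2) \<subseteq> K\<close> and a nontrivial additive character is summed; otherwise averaging over
  \<open>K\<close> kills it.  Hence \<open>W(a)\<^sup>2 = 2 ^ n\<close>.\<close>

definition chi :: "'a::field \<Rightarrow> int" where
  "chi y = (if y = 0 then 1 else -1)"

definition is_bit :: "'a::field \<Rightarrow> bool" where
  "is_bit y \<longleftrightarrow> y = 0 \<or> y = 1"

lemma sum_UNIV_shift: "(\<Sum>x\<in>UNIV. g (x + c)) = (\<Sum>x\<in>UNIV. g x)"
  for c :: "'a::{ab_group_add,finite}"
  by (rule sum.reindex_bij_witness[of _ "\<lambda>x. x - c" "\<lambda>x. x + c"]) auto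

lemma power_2_pow_power_2_pow: "(x ^ 2 ^ a) ^ 2 ^ b = x ^ 2 ^ (a + b)"
  for x :: "'a::comm_monoid_mult"
  by (simp add: power_mult[symmetric] power_add)

lemma power_2_pow_mult_eq_same:
  assumes "(x :: 'a::comm_monoid_mult) ^ 2 ^ k = x"
  shows "x ^ 2 ^ (k * m) = x"
proof (induction m)
  case (Suc m)
  have "x ^ 2 ^ (k * Suc m) = (x ^ 2 ^ (k * m)) ^ 2 ^ k"
    by (simp add: power_2_pow_power_2_pow add.commute)
  then show ?case
    using Suc assms by simp
qed simp

lemma sum_lessThan_add: "(\<Sum>i<a + b. g i) = (\<Sum>i<a. g i) + (\<Sum>j<b. g (a + j))"
  for g :: "nat \<Rightarrow> 'a::comm_monoid_add"
  by (induction b) (simp_all add: add.assoc)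

lemma plateaued_if_walsh_square:
  assumes "n = 2 * s" and "\<And>a. (walsh n h a)\<^sup>2 = 2 ^ n"
  shows "plateaued n h"
  unfolding plateaued_def
proof (intro exI[of _ s] conjI allI)
  fix a
  have "(walsh n h a)\<^sup>2 = (2 ^ s)\<^sup>2"
    using assms by (simp add: power_mult[symmetric] mult.commute)
  then show "walsh n h a \<in> {0, 2 ^ s, - (2 ^ s)}"
    unfolding power2_eq_iff by blast
qed (use assms in auto)

lemma card_le_degree_if_roots:
  fixes p :: "'a::{field,finite} poly"
  assumes "p \<noteq> 0" and "\<And>x. x \<in> S \<Longrightarrow> poly p x = 0"
  shows "card S \<le> degree p"
proof -
  have "card S \<le> card {x. poly p x = 0}"
    by (rule card_mono) (use assms in auto)
  also have "\<dots> \<le> degree p"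
    by (rule card_poly_roots_bound) fact
  finally show ?thesis .
qed

lemma tr_zero [simp]: "tr m (0 :: 'a::field) = 0"
  by (simp add: tr_def power_0_left)

lemma is_bit_mult: "is_bit a \<Longrightarrow> is_bit b \<Longrightarrow> is_bit (a * b)"
  by (auto simp: is_bit_def)

lemma is_bit_prod: "(\<And>i. i \<in> A \<Longrightarrow> is_bit (g i)) \<Longrightarrow> is_bit (\<Prod>i\<in>A. g i)"
  by (induction A rule: infinite_finite_induct) (auto simp: is_bit_mult, simp_all add: is_bit_def)

definition tr_annihilator :: "nat \<Rightarrow> ('i \<Rightarrow> 'a::field) \<Rightarrow> 'i set \<Rightarrow> 'a set" where
  "tr_annihilator n u A = {x. \<forall>j\<in>A. tr n (u j * x) = 0}"

definition subset_sums :: "('i \<Rightarrow> 'a::comm_monoid_add) \<Rightarrow> 'i set \<Rightarrow> 'a set" where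
  "subset_sums u A = (\<lambda>C. \<Sum>j\<in>C. u j) ` Pow A"

text \<open>For \<open>n = 4 * k\<close>, moving the Frobenius \<open>x \<mapsto> x ^ 2 ^ (3 * k)\<close> inside the trace gives
  \<open>tr n (\<mu> * x ^ 2 ^ k * d) = tr n (x * (\<mu> * d) ^ 2 ^ (3 * k))\<close>, so the bilinear form of
  \<open>x \<mapsto> tr n (\<mu> * x ^ (2 ^ k + 1))\<close> is \<open>tr n (x * polar k \<mu> d)\<close>.\<close>
definition polar :: "nat \<Rightarrow> 'a::field \<Rightarrow> 'a \<Rightarrow> 'a" where
  "polar k \<mu> d = \<mu> * d ^ 2 ^ k + (\<mu> * d) ^ 2 ^ (3 * k)"

section \<open>Fields of order \<open>2 ^ n\<close>\<close>

context
  fixes n :: nat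
  assumes card_UNIV: "card (UNIV :: 'a::{field,finite} set) = 2 ^ n"
begin

lemma n_pos: "0 < n"
proof -
  have "card {0, 1 :: 'a} \<le> card (UNIV :: 'a set)"
    by (rule card_mono) auto
  then show ?thesis
    using card_UNIV by (cases n) auto
qed

lemma power_card_minus_1_eq_1:
  fixes x :: 'a
  assumes "x \<noteq> 0"
  shows "x ^ (2 ^ n - 1) = 1"
proof -
  define S where "S = (UNIV :: 'a set) - {0}"
  have card_S: "card S = 2 ^ n - 1"
    unfolding S_def using card_UNIV by (simp add: card_Diff_singleton)
  have "(\<Prod>y\<in>S. x * y) = (\<Prod>y\<in>S. y)"
    by (rule prod.reindex_bij_witness[of _ "\<lambda>y. y / x" "\<lambda>y. x * y"])
       (use assms in \<open>auto simp: S_def\<close>)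
  moreover have "(\<Prod>y\<in>S. x * y) = x ^ card S * (\<Prod>y\<in>S. y)"
    by (simp add: prod.distrib)
  moreover have "(\<Prod>y\<in>S. y) \<noteq> 0"
    by (simp add: S_def)
  ultimately show ?thesis
    using card_S by simp
qed

lemma power_card_eq_same: "(x :: 'a) ^ 2 ^ n = x"
proof (cases "x = 0")
  case False
  have "x ^ 2 ^ n = x * x ^ (2 ^ n - 1)"
    by (simp flip: power_Suc)
  then show ?thesis
    using power_card_minus_1_eq_1[OF False] by simp
qed (use n_pos in simp)

lemma power_2_pow_add_n: "(x :: 'a) ^ 2 ^ (n + m) = x ^ 2 ^ m"
  by (metis power_2_pow_power_2_pow power_card_eq_same)

lemma CHAR_eq_2: "CHAR('a) = 2"
proof -
  have "(-1 :: 'a) ^ (2 ^ n - 1) = -1"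
    using n_pos by simp
  then have "(-1 :: 'a) = 1"
    using power_card_minus_1_eq_1[of "-1"] by simp
  then have "of_nat 2 = (0 :: 'a)"
    by (metis add.right_inverse one_add_one of_nat_numeral)
  then have "CHAR('a) dvd 2"
    by (simp only: of_nat_eq_0_iff_char_dvd)
  moreover have "CHAR('a) \<noteq> 1"
    using CHAR_not_1[where ?'a = 'a] by simp
  ultimately show ?thesis
    using two_is_prime_nat by (auto simp: prime_nat_iff)
qed

lemma add_self [simp]: "(x :: 'a) + x = 0"
  by (metis CHAR_eq_2 mult_2 mult_zero_left of_nat_CHAR of_nat_numeral)

lemma add_self_left [simp]: "(x :: 'a) + (x + y) = y"
  by (simp flip: add.assoc)

lemma frobenius_add: "((x :: 'a) + y) ^ 2 ^ m = x ^ 2 ^ m + y ^ 2 ^ m"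
  by (rule freshmans_dream') (simp_all add: CHAR_eq_2)

lemma frobenius_sum: "(\<Sum>i\<in>A. (g i :: 'a)) ^ 2 ^ m = (\<Sum>i\<in>A. g i ^ 2 ^ m)"
  by (rule freshmans_dream_sum') (simp_all add: CHAR_eq_2)

lemma power_2_pow_subset_sums:
  assumes "\<And>j. j \<in> A \<Longrightarrow> (u j :: 'a) ^ 2 ^ m = u j" and "s \<in> subset_sums u A"
  shows "s ^ 2 ^ m = s"
proof -
  obtain C where "C \<subseteq> A" and "s = (\<Sum>j\<in>C. u j)"
    using assms(2) unfolding subset_sums_def by blast
  then show ?thesis
    using assms(1) by (auto simp: frobenius_sum intro!: sum.cong)
qed

lemma is_bit_add: "is_bit a \<Longrightarrow> is_bit b \<Longrightarrow> is_bit ((a :: 'a) + b)"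
  by (auto simp: is_bit_def)

lemma is_bit_sum: "(\<And>i. i \<in> A \<Longrightarrow> is_bit (g i)) \<Longrightarrow> is_bit (\<Sum>i\<in>A. (g i :: 'a))"
  by (induction A rule: infinite_finite_induct) (auto simp: is_bit_add, simp_all add: is_bit_def)

lemma chi_add: "is_bit a \<Longrightarrow> is_bit b \<Longrightarrow> chi ((a :: 'a) + b) = chi a * chi b"
  by (auto simp: is_bit_def chi_def)

lemma chi_sum:
  "(\<And>i. i \<in> A \<Longrightarrow> is_bit (g i)) \<Longrightarrow> chi (\<Sum>i\<in>A. (g i :: 'a)) = (\<Prod>i\<in>A. chi (g i))"
proof (induction A rule: infinite_finite_induct)
  case (insert a A)
  then show ?case
    by (simp add: chi_add is_bit_sum)
qed (simp_all add: chi_def)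

lemma is_bit_reduced_eval:
  assumes "\<And>j. j < k \<Longrightarrow> is_bit (X j)"
  shows "is_bit (reduced_eval k c (X :: nat \<Rightarrow> 'a))"
  unfolding reduced_eval_def
proof (rule is_bit_sum)
  fix S
  assume "S \<in> Pow {..<k}"
  then have "is_bit (\<Prod>i\<in>S. X i)"
    using assms by (intro is_bit_prod) auto
  then show "is_bit (if c S then \<Prod>i\<in>S. X i else 0)"
    by (simp add: is_bit_def)
qed

lemma tr_add: "tr m ((x :: 'a) + y) = tr m x + tr m y"
  by (simp add: tr_def frobenius_add sum.distrib)

lemma tr_sum: "tr m (\<Sum>i\<in>A. (g i :: 'a)) = (\<Sum>i\<in>A. tr m (g i))"
  unfolding tr_def frobenius_sum by (rule sum.swap)

lemma tr_square: "tr n ((x :: 'a) ^ 2) = tr n x"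
proof -
  have "tr n (x ^ 2) = (\<Sum>i<n. x ^ 2 ^ Suc i)"
    unfolding tr_def by (simp add: power_mult[symmetric])
  also have "\<dots> = (\<Sum>i<Suc n. x ^ 2 ^ i) - x"
    using sum.lessThan_Suc_shift[of "\<lambda>i. x ^ 2 ^ i" n] by (simp del: power_Suc)
  also have "\<dots> = tr n x"
    by (simp add: tr_def power_card_eq_same)
  finally show ?thesis .
qed

lemma tr_power_2_pow: "tr n ((x :: 'a) ^ 2 ^ m) = tr n x"
proof (induction m)
  case (Suc m)
  have "x ^ 2 ^ Suc m = (x ^ 2 ^ m) ^ 2"
    by (simp add: power_mult[symmetric] mult.commute)
  then show ?case
    using Suc tr_square by simp
qed simp

lemma tr_is_bit: "is_bit (tr n (x :: 'a))"
proof -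
  have "tr n x ^ 2 ^ 1 = tr n (x ^ 2 ^ 1)"
    unfolding tr_def frobenius_sum
    by (simp add: power_2_pow_power_2_pow power_mult_distrib add.commute)
  then have "tr n x ^ 2 = tr n x"
    using tr_square[of x] by simp
  then have "tr n x * (tr n x - 1) = 0"
    by (simp add: power2_eq_square algebra_simps)
  then show ?thesis
    by (auto simp: is_bit_def)
qed

lemma tr_mult_sum_power_2_pow:
  assumes c: "(c :: 'a) ^ 2 ^ k = c"
  shows "tr k (c * (\<Sum>i<m. y ^ 2 ^ (k * i))) = tr (k * m) (c * y)"
proof (induction m)
  case (Suc m)
  have "tr k (c * y ^ 2 ^ (k * m)) = (\<Sum>j<k. (c * y) ^ 2 ^ (k * m + j))"
    unfolding tr_def
  proof (intro sum.cong refl)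
    fix j
    have "c ^ 2 ^ j = (c ^ 2 ^ (k * m)) ^ 2 ^ j"
      using power_2_pow_mult_eq_same[OF c] by simp
    then show "(c * y ^ 2 ^ (k * m)) ^ 2 ^ j = (c * y) ^ 2 ^ (k * m + j)"
      by (simp add: power_mult_distrib power_2_pow_power_2_pow)
  qed
  moreover have "tr (k * Suc m) (c * y) = tr (k * m) (c * y) + (\<Sum>j<k. (c * y) ^ 2 ^ (k * m + j))"
    unfolding tr_def mult_Suc_right add.commute[of k] by (rule sum_lessThan_add)
  ultimately show ?case
    using Suc by (simp add: distrib_left tr_add)
qed (simp add: tr_def power_0_left)

lemma exists_tr_neq_0: "\<exists>x :: 'a. tr n x \<noteq> 0"
proof (rule ccontr)
  assume all_zero: "\<not> ?thesis"
  define P :: "'a poly" where "P = (\<Sum>i<n. monom 1 (2 ^ i))"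
  have "coeff P (2 ^ (n - 1)) = (\<Sum>i<n. if i = n - 1 then 1 else 0)"
    unfolding P_def coeff_sum by (intro sum.cong refl) auto
  also have "\<dots> = 1"
    using n_pos by simp
  finally have "P \<noteq> 0"
    by auto
  moreover have "poly P x = tr n x" for x
    by (simp add: P_def poly_sum poly_monom tr_def)
  ultimately have "card (UNIV :: 'a set) \<le> degree P"
    using all_zero by (intro card_le_degree_if_roots) auto
  also have "degree P \<le> 2 ^ (n - 1)"
    unfolding P_def by (rule degree_sum_le) (auto intro: order.trans[OF degree_monom_le])
  also have "\<dots> < 2 ^ n"
    using n_pos by simp
  finally show False
    using card_UNIV by simp
qed

section \<open>Additive character sums\<close>

lemma sum_chi_tr_mult:
  assumes "(b :: 'a) \<noteq> 0"
  shows "(\<Sum>x\<in>UNIV. chi (tr n (b * x))) = 0"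
proof -
  obtain x1 :: 'a where "tr n x1 \<noteq> 0"
    using exists_tr_neq_0 by blast
  then have "tr n (b * (x1 / b)) = 1"
    using assms tr_is_bit[of x1] by (simp add: is_bit_def)
  then have "chi (tr n (b * (x + x1 / b))) = - chi (tr n (b * x))" for x
    using tr_is_bit[of "b * x"] by (auto simp: distrib_left tr_add chi_def is_bit_def)
  then have "(\<Sum>x\<in>UNIV. chi (tr n (b * x))) = (\<Sum>x\<in>UNIV. - chi (tr n (b * x)))"
    using sum_UNIV_shift[of "\<lambda>x. chi (tr n (b * x))" "x1 / b"] by simp
  then show ?thesis
    by (simp add: sum_negf)
qed

lemma sum_Pow_chi_tr:
  fixes x :: 'a and u :: "'i \<Rightarrow> 'a"
  assumes "finite A"
  shows "(\<Sum>C\<in>Pow A. chi (tr n (x * (\<Sum>j\<in>C. u j))))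
       = (if x \<in> tr_annihilator n u A then 2 ^ card A else 0)"
proof -
  have "(\<Sum>C\<in>Pow A. chi (tr n (x * (\<Sum>j\<in>C. u j))))
      = (\<Sum>C\<in>Pow A. \<Prod>j\<in>C. chi (tr n (x * u j)))"
    by (simp add: sum_distrib_left tr_sum chi_sum tr_is_bit)
  also have "\<dots> = (\<Prod>j\<in>A. chi (tr n (x * u j)) + 1)"
    using prod_add[OF assms, of "\<lambda>j. chi (tr n (x * u j))" "\<lambda>_. 1"] by simp
  also have "\<dots> = (if x \<in> tr_annihilator n u A then 2 ^ card A else 0)"
    using assms by (auto simp: tr_annihilator_def chi_def mult.commute intro: prod_zero)
  finally show ?thesis .
qed

text \<open>Writing the indicator of the annihilator as in \<open>sum_Pow_chi_tr\<close> turns the sum into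
  complete character sums, one for each \<open>C \<subseteq> A\<close>, all nontrivial since \<open>b\<close> is no subset sum.\<close>
lemma sum_annihilator_chi_tr:
  fixes b :: 'a and u :: "'i \<Rightarrow> 'a"
  assumes "finite A" and "b \<notin> subset_sums u A"
  shows "(\<Sum>x\<in>tr_annihilator n u A. chi (tr n (x * b))) = 0"
proof -
  let ?K = "tr_annihilator n u A"
  have "2 ^ card A * (\<Sum>x\<in>?K. chi (tr n (x * b)))
      = (\<Sum>x\<in>UNIV. if x \<in> ?K then 2 ^ card A * chi (tr n (x * b)) else 0)"
    by (simp add: sum_distrib_left sum.If_cases)
  also have "\<dots> = (\<Sum>x\<in>UNIV. (\<Sum>C\<in>Pow A. chi (tr n (x * (\<Sum>j\<in>C. u j)))) * chi (tr n (x * b)))"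
    by (intro sum.cong refl) (simp add: sum_Pow_chi_tr[OF assms(1)])
  also have "\<dots> = (\<Sum>C\<in>Pow A. \<Sum>x\<in>UNIV. chi (tr n (((\<Sum>j\<in>C. u j) + b) * x)))"
  proof -
    have "chi (tr n (x * (\<Sum>j\<in>C. u j))) * chi (tr n (x * b))
        = chi (tr n (((\<Sum>j\<in>C. u j) + b) * x))" for x C
      by (simp add: distrib_right distrib_left tr_add chi_add tr_is_bit mult.commute)
    then show ?thesis
      by (simp add: sum_distrib_right sum.swap[of _ UNIV])
  qed
  also have "\<dots> = 0"
  proof (rule sum.neutral, rule ballI)
    fix C assume "C \<in> Pow A"
    then have "(\<Sum>j\<in>C. u j) + b \<noteq> 0"
      using assms(2) unfolding subset_sums_def by (metis add_self add_left_cancel image_eqI)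
    then show "(\<Sum>x\<in>UNIV. chi (tr n (((\<Sum>j\<in>C. u j) + b) * x))) = 0"
      by (rule sum_chi_tr_mult)
  qed
  finally show ?thesis
    by simp
qed

lemma sum_chi_tr_mult_invariant:
  fixes b :: 'a and u :: "'i \<Rightarrow> 'a" and \<Psi> :: "'a \<Rightarrow> int"
  assumes "finite A" and "b \<notin> subset_sums u A"
    and invariant: "\<And>x x0. x0 \<in> tr_annihilator n u A \<Longrightarrow> \<Psi> (x + x0) = \<Psi> x"
  shows "(\<Sum>x\<in>UNIV. chi (tr n (x * b)) * \<Psi> x) = 0"
proof -
  let ?K = "tr_annihilator n u A"
  let ?S = "\<Sum>x\<in>UNIV. chi (tr n (x * b)) * \<Psi> x"
  have shift: "?S = chi (tr n (x0 * b)) * ?S" if "x0 \<in> ?K" for x0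
  proof -
    have "?S = (\<Sum>x\<in>UNIV. chi (tr n ((x + x0) * b)) * \<Psi> (x + x0))"
      by (rule sum_UNIV_shift[symmetric])
    also have "\<dots> = (\<Sum>x\<in>UNIV. chi (tr n (x0 * b)) * (chi (tr n (x * b)) * \<Psi> x))"
      using that by (intro sum.cong refl) (simp add: invariant distrib_right tr_add chi_add tr_is_bit)
    also have "\<dots> = chi (tr n (x0 * b)) * ?S"
      by (simp add: sum_distrib_left)
    finally show ?thesis .
  qed
  have "card ?K * ?S = (\<Sum>x0\<in>?K. ?S)"
    by simp
  also have "\<dots> = (\<Sum>x0\<in>?K. chi (tr n (x0 * b)) * ?S)"
    by (rule sum.cong[OF refl], rule shift)
  also have "\<dots> = (\<Sum>x0\<in>?K. chi (tr n (x0 * b))) * ?S"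
    by (rule sum_distrib_right[symmetric])
  also have "\<dots> = 0"
    using sum_annihilator_chi_tr[OF assms(1,2)] by simp
  finally have "card ?K * ?S = 0" .
  moreover have "0 \<in> ?K"
    by (simp add: tr_annihilator_def)
  ultimately show ?thesis
    by auto
qed

section \<open>Walsh spectra of quadratic plus periodic functions\<close>

lemma walsh_eq_sum_chi: "walsh n h a = (\<Sum>x\<in>UNIV. chi (h x + tr n (a * (x :: 'a))))"
  by (simp add: walsh_def chi_def)

lemma walsh_square:
  fixes h :: "'a \<Rightarrow> 'a"
  assumes h_bit: "\<And>x. is_bit (h x)"
  shows "(walsh n h a)\<^sup>2 = (\<Sum>d\<in>UNIV. chi (tr n (a * d)) * (\<Sum>x\<in>UNIV. chi (h x + h (x + d))))"
proof -
  have product: "chi (h x + tr n (a * x)) * chi (h (x + d) + tr n (a * (x + d)))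
      = chi (tr n (a * d)) * chi (h x + h (x + d))" for x d
  proof -
    have "chi (h x + tr n (a * x)) * chi (h (x + d) + tr n (a * (x + d)))
        = chi ((h x + tr n (a * x)) + (h (x + d) + tr n (a * (x + d))))"
      by (simp add: chi_add is_bit_add h_bit tr_is_bit)
    also have "(h x + tr n (a * x)) + (h (x + d) + tr n (a * (x + d)))
        = tr n (a * d) + (h x + h (x + d))"
      by (simp add: distrib_left tr_add add_ac)
    also have "chi \<dots> = chi (tr n (a * d)) * chi (h x + h (x + d))"
      by (simp add: chi_add is_bit_add h_bit tr_is_bit)
    finally show ?thesis .
  qed
  have "(walsh n h a)\<^sup>2
      = (\<Sum>x\<in>UNIV. \<Sum>y\<in>UNIV. chi (h x + tr n (a * x)) * chi (h y + tr n (a * y)))"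
    by (simp add: walsh_eq_sum_chi power2_eq_square sum_product)
  also have "\<dots> = (\<Sum>x\<in>UNIV. \<Sum>d\<in>UNIV.
      chi (h x + tr n (a * x)) * chi (h (x + d) + tr n (a * (x + d))))"
    by (rule sum.cong[OF refl], subst sum_UNIV_shift[symmetric, of _ x]) (simp only: add.commute)
  also have "\<dots> = (\<Sum>x\<in>UNIV. \<Sum>d\<in>UNIV. chi (tr n (a * d)) * chi (h x + h (x + d)))"
    by (simp only: product)
  also have "\<dots> = (\<Sum>d\<in>UNIV. \<Sum>x\<in>UNIV. chi (tr n (a * d)) * chi (h x + h (x + d)))"
    by (rule sum.swap)
  also have "\<dots> = (\<Sum>d\<in>UNIV. chi (tr n (a * d)) * (\<Sum>x\<in>UNIV. chi (h x + h (x + d))))"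
    by (simp only: sum_distrib_left)
  finally show ?thesis .
qed

text \<open>For \<open>d \<noteq> 0\<close> either \<open>d\<close> is a period of \<open>G\<close>, leaving a nontrivial character sum, or
  \<open>\<phi> d\<close> is not a subset sum and averaging over the periods of \<open>G\<close> kills the sum.\<close>
lemma sum_chi_tr_mult_plus_derivative:
  fixes G \<phi> :: "'a \<Rightarrow> 'a" and u :: "'i \<Rightarrow> 'a"
  assumes "finite A"
    and \<phi>_eq_0_iff: "\<And>d. \<phi> d = 0 \<longleftrightarrow> d = 0"
    and \<phi>_subset_sums: "\<And>d. \<phi> d \<in> subset_sums u A \<Longrightarrow> d \<in> tr_annihilator n u A"
    and G_invariant: "\<And>x x0. x0 \<in> tr_annihilator n u A \<Longrightarrow> G (x + x0) = G x"
  shows "(\<Sum>x\<in>UNIV. chi (tr n (x * \<phi> d)) * chi (G x + G (x + d))) = (if d = 0 then 2 ^ n else 0)"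
proof (cases "d = 0")
  case True
  then show ?thesis
    using \<phi>_eq_0_iff[of 0] card_UNIV by (simp add: chi_def)
next
  case False
  show ?thesis
  proof (cases "\<phi> d \<in> subset_sums u A")
    case True
    then have "G (x + d) = G x" for x
      by (simp add: G_invariant \<phi>_subset_sums)
    then have "(\<Sum>x\<in>UNIV. chi (tr n (x * \<phi> d)) * chi (G x + G (x + d)))
        = (\<Sum>x\<in>UNIV. chi (tr n (\<phi> d * x)))"
      by (simp add: chi_def mult.commute)
    also have "\<dots> = 0"
      using False \<phi>_eq_0_iff by (intro sum_chi_tr_mult) auto
    finally show ?thesis
      using False by simp
  next
    case outside: False
    have "(\<Sum>x\<in>UNIV. chi (tr n (x * \<phi> d)) * chi (G x + G (x + d))) = 0"
    proof (rule sum_chi_tr_mult_invariant[OF \<open>finite A\<close> outside])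
      fix x x0 :: 'a
      assume "x0 \<in> tr_annihilator n u A"
      then show "chi (G (x + x0) + G (x + x0 + d)) = chi (G x + G (x + d))"
        using G_invariant[of x0 x] G_invariant[of x0 "x + d"] by (simp add: add_ac)
    qed
    then show ?thesis
      using False by simp
  qed
qed

lemma walsh_square_quadratic_plus_invariant:
  fixes Q G \<phi> :: "'a \<Rightarrow> 'a" and u :: "'i \<Rightarrow> 'a"
  assumes "finite A"
    and Q_bit: "\<And>x. is_bit (Q x)" and G_bit: "\<And>x. is_bit (G x)"
    and Q_add: "\<And>x d. Q (x + d) = Q x + Q d + tr n (x * \<phi> d)"
    and \<phi>_eq_0_iff: "\<And>d. \<phi> d = 0 \<longleftrightarrow> d = 0"
    and \<phi>_subset_sums: "\<And>d. \<phi> d \<in> subset_sums u A \<Longrightarrow> d \<in> tr_annihilator n u A"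
    and G_invariant: "\<And>x x0. x0 \<in> tr_annihilator n u A \<Longrightarrow> G (x + x0) = G x"
  shows "(walsh n (\<lambda>x. Q x + G x) a)\<^sup>2 = 2 ^ n"
proof -
  have Q_0: "Q 0 = 0"
    using Q_add[of 0 0] by simp
  have derivative: "chi ((Q x + G x) + (Q (x + d) + G (x + d)))
      = chi (Q d) * (chi (tr n (x * \<phi> d)) * chi (G x + G (x + d)))" for x d
  proof -
    have "(Q x + G x) + (Q (x + d) + G (x + d)) = Q d + (tr n (x * \<phi> d) + (G x + G (x + d)))"
      unfolding Q_add by (simp add: add_ac)
    then show ?thesis
      by (simp only:) (simp add: chi_add is_bit_add Q_bit G_bit tr_is_bit)
  qed
  have autocorrelation: "(\<Sum>x\<in>UNIV. chi (tr n (x * \<phi> d)) * chi (G x + G (x + d)))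
      = (if d = 0 then 2 ^ n else 0)" for d
    using \<open>finite A\<close> \<phi>_eq_0_iff \<phi>_subset_sums G_invariant by (rule sum_chi_tr_mult_plus_derivative)
  have "(walsh n (\<lambda>x. Q x + G x) a)\<^sup>2 = (\<Sum>d\<in>UNIV. chi (tr n (a * d))
      * (\<Sum>x\<in>UNIV. chi ((Q x + G x) + (Q (x + d) + G (x + d)))))"
    by (rule walsh_square) (simp add: is_bit_add Q_bit G_bit)
  also have "\<dots> = (\<Sum>d\<in>UNIV. chi (tr n (a * d)) * (chi (Q d) * (if d = 0 then 2 ^ n else 0)))"
    by (simp add: derivative autocorrelation flip: sum_distrib_left)
  also have "\<dots> = 2 ^ n"
    by (simp add: Q_0 chi_def if_distrib[of "times _"] cong: if_cong)
  finally show ?thesis .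
qed

section \<open>The field of order \<open>2 ^ (4 * k)\<close>\<close>

context
  fixes k :: nat
  assumes n_eq: "n = 4 * k" and k_pos: "0 < k"
begin

lemma tr_mult_rtr:
  assumes "(c :: 'a) ^ 2 ^ k = c"
  shows "tr k (c * rtr n k y) = tr n (c * y)"
proof -
  have "n div k = 4" and "n = k * 4"
    using k_pos by (simp_all add: n_eq)
  then show ?thesis
    by (simp add: rtr_def tr_mult_sum_power_2_pow[OF assms])
qed

lemma power_2_pow_4k: "(x :: 'a) ^ 2 ^ (4 * k + m) = x ^ 2 ^ m"
  using power_2_pow_add_n n_eq by simp

text \<open>\<open>tr n\<close> restricted to the subfield of order \<open>2 ^ (2 * k)\<close> is twice its absolute trace.\<close>
lemma tr_eq_0_if_in_subfield:
  assumes "(y :: 'a) ^ 2 ^ (2 * k) = y"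
  shows "tr n y = 0"
proof -
  have "tr n y = (\<Sum>i<2 * k. y ^ 2 ^ i) + (\<Sum>j<2 * k. y ^ 2 ^ (2 * k + j))"
    unfolding tr_def n_eq using sum_lessThan_add[of "\<lambda>i. y ^ 2 ^ i" "2 * k" "2 * k"] by simp
  also have "(\<Sum>j<2 * k. y ^ 2 ^ (2 * k + j)) = (\<Sum>j<2 * k. y ^ 2 ^ j)"
    by (intro sum.cong refl) (metis assms power_2_pow_power_2_pow)
  finally show ?thesis
    by simp
qed

lemma tr_quadratic_add:
  "tr n (\<mu> * (x + d) ^ (2 ^ k + 1))
     = tr n (\<mu> * x ^ (2 ^ k + 1)) + tr n (\<mu> * d ^ (2 ^ k + 1)) + tr n (x * polar k \<mu> (d :: 'a))"
proof -
  have "\<mu> * (x + d) ^ (2 ^ k + 1)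
      = \<mu> * x ^ (2 ^ k + 1) + \<mu> * d ^ (2 ^ k + 1) + (\<mu> * x ^ 2 ^ k * d + x * (\<mu> * d ^ 2 ^ k))"
    by (simp add: frobenius_add algebra_simps power_add)
  moreover have "tr n (\<mu> * x ^ 2 ^ k * d) = tr n (x * (\<mu> * d) ^ 2 ^ (3 * k))"
  proof -
    have "(x ^ 2 ^ k) ^ 2 ^ (3 * k) = x"
      using power_2_pow_4k[of x 0] by (simp add: power_2_pow_power_2_pow)
    then have "(\<mu> * x ^ 2 ^ k * d) ^ 2 ^ (3 * k) = x * (\<mu> * d) ^ 2 ^ (3 * k)"
      by (simp add: power_mult_distrib)
    then show ?thesis
      by (metis tr_power_2_pow)
  qed
  ultimately show ?thesis
    by (simp add: polar_def tr_add distrib_left add_ac)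
qed

text \<open>The Frobenius \<open>x \<mapsto> x ^ 2 ^ (2 * k)\<close> exchanges the two terms of \<open>polar k \<mu> d\<close> up to
  swapping \<open>\<mu>\<close> and \<open>\<mu> ^ 2 ^ k\<close>; as these differ, invariance forces \<open>d ^ 2 ^ k = d ^ 2 ^ (3 * k)\<close>.\<close>
lemma in_subfield_if_polar_in_subfield:
  assumes \<mu>: "(\<mu> :: 'a) ^ 2 ^ (2 * k) = \<mu>" "\<mu> ^ 2 ^ k \<noteq> \<mu>"
    and fixed: "polar k \<mu> d ^ 2 ^ (2 * k) = polar k \<mu> d"
  shows "d ^ 2 ^ (2 * k) = d"
proof -
  define e e' \<mu>' where "e = d ^ 2 ^ k" and "e' = d ^ 2 ^ (3 * k)" and "\<mu>' = \<mu> ^ 2 ^ k"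
  have e: "e ^ 2 ^ (2 * k) = e'"
    by (simp add: e_def e'_def power_2_pow_power_2_pow)
  have "e' ^ 2 ^ (2 * k) = d ^ 2 ^ (4 * k + k)"
    by (simp add: e'_def power_2_pow_power_2_pow)
  then have e': "e' ^ 2 ^ (2 * k) = e"
    by (simp only: power_2_pow_4k e_def)
  have \<mu>': "\<mu>' ^ 2 ^ (2 * k) = \<mu>'"
    by (metis \<mu>(1) \<mu>'_def power_2_pow_power_2_pow add.commute)
  have "\<mu> ^ 2 ^ (3 * k) = (\<mu> ^ 2 ^ (2 * k)) ^ 2 ^ k"
    by (simp add: power_2_pow_power_2_pow)
  then have "\<mu> ^ 2 ^ (3 * k) = \<mu>'"
    by (simp add: \<mu>(1) \<mu>'_def)
  then have polar: "polar k \<mu> d = \<mu> * e + \<mu>' * e'"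
    by (simp add: polar_def e_def e'_def power_mult_distrib)
  then have "\<mu> * e + \<mu>' * e' = \<mu> * e' + \<mu>' * e"
    using fixed by (simp add: frobenius_add power_mult_distrib \<mu>(1) \<mu>' e e')
  then have "(\<mu> - \<mu>') * (e - e') = 0"
    by (simp add: algebra_simps)
  then have "e ^ 2 ^ (3 * k) = e' ^ 2 ^ (3 * k)"
    using \<mu>(2) by (simp add: \<mu>'_def)
  moreover have "e ^ 2 ^ (3 * k) = d ^ 2 ^ (4 * k + 0)" and "e' ^ 2 ^ (3 * k) = d ^ 2 ^ (4 * k + 2 * k)"
    by (simp_all add: e_def e'_def power_2_pow_power_2_pow)
  ultimately show ?thesis
    by (simp only: power_2_pow_4k) simp
qed

lemma polar_eq_0_iff:
  assumes \<mu>: "(\<mu> :: 'a) ^ 2 ^ (2 * k) = \<mu>" "\<mu> ^ 2 ^ k \<noteq> \<mu>"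
  shows "polar k \<mu> d = 0 \<longleftrightarrow> d = 0"
proof
  assume zero: "polar k \<mu> d = 0"
  then have "d ^ 2 ^ (2 * k) = d"
    using in_subfield_if_polar_in_subfield[OF \<mu>] by simp
  then have "d ^ 2 ^ (3 * k) = d ^ 2 ^ k" and "\<mu> ^ 2 ^ (3 * k) = \<mu> ^ 2 ^ k"
    using \<mu>(1) by (metis power_2_pow_power_2_pow add.commute mult_Suc numeral_3_eq_3 numeral_2_eq_2)+
  then have "(\<mu> + \<mu> ^ 2 ^ k) * d ^ 2 ^ k = 0"
    using zero by (simp add: polar_def algebra_simps)
  moreover have "\<mu> + \<mu> ^ 2 ^ k \<noteq> 0"
    using \<mu>(2) by (metis add_self add_left_cancel)
  ultimately show "d = 0"
    by simp
qed (simp add: polar_def power_0_left)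

text \<open>If \<open>U = {y. y ^ (2 ^ k + 1) = 1}\<close> (inside the subfield of order \<open>q\<^sup>2\<close>, \<open>q = 2 ^ k\<close>) were
  trivial, then \<open>x ^ ((q - 1) * (q\<^sup>2 + 1)) \<in> U\<close> would make every nonzero \<open>x\<close> a root of a
  polynomial of degree less than \<open>q\<^sup>4 - 1\<close>.\<close>
lemma exists_unit_circle_neq_1: "\<exists>y :: 'a. y ^ 2 ^ (2 * k) = y \<and> y ^ (2 ^ k + 1) = 1 \<and> y \<noteq> 1"
proof (rule ccontr)
  assume trivial: "\<not> ?thesis"
  define q :: nat where "q = 2 ^ k"
  define M where "M = (q - 1) * (q * q + 1)"
  have "q \<ge> 2"
    using self_le_power[of 2 k] k_pos by (simp add: q_def)
  then obtain r where r: "q = r + 2"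
    using le_Suc_ex by (metis add.commute)
  have "2 ^ n = q ^ 4"
    by (simp add: n_eq q_def flip: power_mult)
  moreover have "M * (q + 1) + 1 = q ^ 4"
    unfolding M_def r by (simp add: algebra_simps eval_nat_numeral)
  ultimately have M_times: "M * (q + 1) = 2 ^ n - 1"
    by simp
  have square: "2 ^ (2 * k) = (q + 1) * (q - 1) + 1"
    unfolding mult_2 power_add q_def[symmetric] r by (simp add: algebra_simps)
  have "x ^ M = 1" if "x \<noteq> 0" for x :: 'a
  proof -
    have norm: "(x ^ M) ^ (q + 1) = 1"
      using power_card_minus_1_eq_1[OF that] by (simp only: power_mult[symmetric] M_times)
    then have "(x ^ M) ^ 2 ^ (2 * k) = x ^ M"
      unfolding square power_add[of _ "(q + 1) * (q - 1)" 1] power_mult[of _ "q + 1" "q - 1"]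
      by simp
    then show ?thesis
      using trivial norm unfolding q_def by metis
  qed
  moreover have "M > 0"
    unfolding M_def r by simp
  ultimately have "card ((UNIV :: 'a set) - {0}) \<le> degree (monom (1 :: 'a) M - 1)"
    by (intro card_le_degree_if_roots) (auto simp: poly_monom monom_eq_1_iff)
  also have "\<dots> \<le> M"
    by (rule order.trans[OF degree_diff_le_max]) (simp add: degree_monom_le)
  finally have "M * (q + 1) \<le> M"
    using card_UNIV M_times by (simp add: card_Diff_singleton)
  then show False
    using \<open>M > 0\<close> r by simp
qed

lemma power_2_pow_neq_if_generates:
  assumes \<omega>: "(\<omega> :: 'a) ^ (2 ^ k + 1) = 1"
    and generates: "\<forall>y. y ^ 2 ^ (2 * k) = y \<and> y ^ (2 ^ k + 1) = 1 \<longrightarrow> (\<exists>m :: nat. y = \<omega> ^ m)"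
  shows "\<omega> ^ 2 ^ k \<noteq> \<omega>"
proof
  assume fixed: "\<omega> ^ 2 ^ k = \<omega>"
  then have "\<omega> ^ 2 = 1"
    using \<omega> by (simp add: power_add power2_eq_square)
  then have "(\<omega> + 1) ^ 2 = 0"
    using frobenius_add[of \<omega> 1 1] by simp
  then have "\<omega> + 1 = 1 + 1"
    by simp
  then have "\<omega> = 1"
    by (rule add_right_imp_eq)
  obtain y :: 'a where y: "y ^ 2 ^ (2 * k) = y" "y ^ (2 ^ k + 1) = 1" "y \<noteq> 1"
    using exists_unit_circle_neq_1 by auto
  moreover obtain m where "y = \<omega> ^ m"
    using generates y(1,2) by auto
  ultimately show False
    using \<open>\<omega> = 1\<close> by simp
qed

lemma walsh_square_component:
  fixes u :: "'i \<Rightarrow> 'a" and G :: "'a \<Rightarrow> 'a"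
  assumes c: "c ^ 2 ^ k = c" "c \<noteq> 0"
    and \<omega>: "\<omega> ^ 2 ^ (2 * k) = \<omega>" "\<omega> ^ 2 ^ k \<noteq> \<omega>"
    and "finite A" and u: "\<And>j. j \<in> A \<Longrightarrow> u j ^ 2 ^ (2 * k) = u j"
    and G_bit: "\<And>x. is_bit (G x)"
    and G_invariant: "\<And>x x0. x0 \<in> tr_annihilator n u A \<Longrightarrow> G (x + x0) = G x"
  shows "(walsh n (\<lambda>x. tr k (c * rtr n k (\<omega> * x ^ (2 ^ k + 1))) + G x) a)\<^sup>2 = 2 ^ n"
proof -
  define \<mu> where "\<mu> = c * \<omega>"
  have "c ^ 2 ^ (2 * k) = c"
    using power_2_pow_mult_eq_same[OF c(1), of 2] by (simp add: mult.commute)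
  then have \<mu>: "\<mu> ^ 2 ^ (2 * k) = \<mu>" "\<mu> ^ 2 ^ k \<noteq> \<mu>"
    using c \<omega> by (simp_all add: \<mu>_def power_mult_distrib)
  have in_annihilator: "d \<in> tr_annihilator n u A" if "polar k \<mu> d \<in> subset_sums u A" for d
  proof -
    have "polar k \<mu> d ^ 2 ^ (2 * k) = polar k \<mu> d"
      using u that by (rule power_2_pow_subset_sums)
    then have "d ^ 2 ^ (2 * k) = d"
      by (rule in_subfield_if_polar_in_subfield[OF \<mu>])
    then show ?thesis
      using u by (simp add: tr_annihilator_def tr_eq_0_if_in_subfield power_mult_distrib)
  qed
  have "(walsh n (\<lambda>x. tr n (\<mu> * x ^ (2 ^ k + 1)) + G x) a)\<^sup>2 = 2 ^ n"
  proof (rule walsh_square_quadratic_plus_invariant[where \<phi> = "polar k \<mu>"])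
    show "tr n (\<mu> * (x + d) ^ (2 ^ k + 1)) = tr n (\<mu> * x ^ (2 ^ k + 1))
        + tr n (\<mu> * d ^ (2 ^ k + 1)) + tr n (x * polar k \<mu> d)" for x d
      by (rule tr_quadratic_add)
    show "polar k \<mu> d = 0 \<longleftrightarrow> d = 0" for d
      by (rule polar_eq_0_iff[OF \<mu>])
  qed (use \<open>finite A\<close> G_bit in_annihilator G_invariant tr_is_bit in auto)
  then show ?thesis
    by (simp add: tr_mult_rtr c(1) \<mu>_def mult.assoc)
qed

lemma plateaued_component:
  fixes u :: "'i \<Rightarrow> 'a" and G :: "'a \<Rightarrow> 'a"
  assumes "c ^ 2 ^ k = c" "c \<noteq> 0"
    and "\<omega> ^ 2 ^ (2 * k) = \<omega>" "\<omega> ^ 2 ^ k \<noteq> \<omega>"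
    and "finite A" and "\<And>j. j \<in> A \<Longrightarrow> u j ^ 2 ^ (2 * k) = u j"
    and "\<And>x. is_bit (G x)"
    and "\<And>x x0. x0 \<in> tr_annihilator n u A \<Longrightarrow> G (x + x0) = G x"
  shows "plateaued n (\<lambda>x. tr k (c * rtr n k (\<omega> * x ^ (2 ^ k + 1))) + G x)"
  using walsh_square_component[OF assms] n_eq by (intro plateaued_if_walsh_square[where s = "2 * k"]) simp_all

end

end

lemma reduced_eval_cong:
  "(\<And>j. j < k \<Longrightarrow> X j = Y j) \<Longrightarrow> reduced_eval k c X = reduced_eval k c Y"
  unfolding reduced_eval_def by (intro sum.cong refl) (auto intro!: prod.cong)

theorem corollary8:
  fixes n k t :: nat and u :: "nat \<Rightarrow> 'a::{field,finite}" and \<omega> :: 'a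
    and F :: "nat \<Rightarrow> nat set \<Rightarrow> bool" and f :: "nat \<Rightarrow> 'a \<Rightarrow> 'a"
  assumes card: "card (UNIV :: 'a set) = 2 ^ n"
    and n_def: "n = 4 * k"
    and k2: "k \<ge> 2"
    and u_in: "\<forall>i<k. u i \<noteq> 0 \<and> u i ^ (2 ^ (2 * k)) = u i"
    and u_pair: "\<forall>i j. i < j \<and> j < k \<longrightarrow>
        u i * u j ^ (2 ^ k) \<noteq> 0 \<and> (u i * u j ^ (2 ^ k)) ^ (2 ^ k) = u i * u j ^ (2 ^ k)"
    and \<omega>_in: "\<omega> ^ (2 ^ (2 * k)) = \<omega> \<and> \<omega> ^ (2 ^ k + 1) = 1"
    and \<omega>_gen: "\<forall>y. y ^ (2 ^ (2 * k)) = y \<and> y ^ (2 ^ k + 1) = 1 \<longrightarrow> (\<exists>m::nat. y = \<omega> ^ m)"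
    and t_pos: "0 < t"
    and f_def: "\<forall>i<t. \<forall>x. f i x = reduced_eval k (F i) (\<lambda>j. tr n (u j * x))"
  shows "(\<forall>lam v. lam ^ (2 ^ k) = lam \<and> (lam \<noteq> 0 \<or> (\<exists>i<t. v i)) \<longrightarrow>
            plateaued n (\<lambda>x. tr k (lam * rtr n k (\<omega> * x ^ (2 ^ k + 1)))
                              + (\<Sum>i<t. if v i then f i x else 0)))
     \<longleftrightarrow>
         (\<forall>v. (\<exists>i<t. v i) \<longrightarrow> plateaued n (\<lambda>x. \<Sum>i<t. if v i then f i x else 0))"
proof -
  have k_pos: "0 < k"
    using k2 by simp
  let ?G = "\<lambda>v x. \<Sum>i<t. if v i then f i x else 0"
  have "is_bit (f i x)" if "i < t" for i x
    using f_def that by (simp add: is_bit_reduced_eval[OF card] tr_is_bit[OF card])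
  then have G_bit: "is_bit (?G v x)" for v x
    by (intro is_bit_sum[OF card]) (simp add: is_bit_def)
  have G_invariant: "?G v (x + x0) = ?G v x" if "x0 \<in> tr_annihilator n u {..<k}" for v x x0
    using that f_def
    by (auto simp: tr_annihilator_def distrib_left tr_add[OF card] intro!: sum.cong reduced_eval_cong)
  have \<omega>_notin: "\<omega> ^ 2 ^ k \<noteq> \<omega>"
    using power_2_pow_neq_if_generates[OF card n_def k_pos] \<omega>_in \<omega>_gen by blast
  have bent: "plateaued n (\<lambda>x. tr k (lam * rtr n k (\<omega> * x ^ (2 ^ k + 1))) + ?G v x)"
    if "lam ^ 2 ^ k = lam" and "lam \<noteq> 0" for lam v
    using that \<omega>_in \<omega>_notin u_in G_bit G_invariant
    by (intro plateaued_component[OF card n_def k_pos, where A = "{..<k}" and u = u]) auto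
  show ?thesis
  proof (intro iffI allI impI)
    fix v :: "nat \<Rightarrow> bool"
    assume components: "\<forall>lam v. lam ^ 2 ^ k = lam \<and> (lam \<noteq> 0 \<or> (\<exists>i<t. v i)) \<longrightarrow>
      plateaued n (\<lambda>x. tr k (lam * rtr n k (\<omega> * x ^ (2 ^ k + 1))) + ?G v x)"
      and "\<exists>i<t. v i"
    then show "plateaued n (?G v)"
      using components[rule_format, of 0 v] by simp
  next
    fix lam :: 'a and v :: "nat \<Rightarrow> bool"
    assume "\<forall>v. (\<exists>i<t. v i) \<longrightarrow> plateaued n (?G v)"
      and "lam ^ 2 ^ k = lam \<and> (lam \<noteq> 0 \<or> (\<exists>i<t. v i))"
    then show "plateaued n (\<lambda>x. tr k (lam * rtr n k (\<omega> * x ^ (2 ^ k + 1))) + ?G v x)"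
      using bent by (cases "lam = 0") simp_all
  qed
qed

end
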